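(* Let $f$, $\mathcal{X}$, $D_0$, $f^*$, $\epsilon$, $R_\epsilon$, $M$ and DFDS be as in the context. Let $x^*\in\mathcal{X}$ be a global minimizer of $f$ over $\mathcal{X}$ and let $x_k\in\mathcal{X}_{R_\epsilon}$ with $x_k\notin\mathcal{X}^*_{R_\epsilon}$ (so that $\|x^*-x_k\|>R_\epsilon$). Define $\alpha=\arcsin\frac{\sqrt{3}R_\epsilon}{2\|x^*-x_k\|}$ and $\mathcal{S}^{N-1}_\alpha=\{d\in\mathcal{S}^{N-1}: \angle(x^*-x_k,d)\le\alpha\}$, where $\angle(u,v)\in[0,\pi]$ denotes the angle between vectors $u,v$. Then: 1. $\frac{\sqrt{3}R_\epsilon}{2(D_0+R_\epsilon)}\le\sin\alpha<\frac{\sqrt{3}}{2}$, equivalently $\arcsin\!\big(\frac{\sqrt{3}R_\epsilon}{2(D_0+R_\epsilon)}\big)\le\alpha<\frac{\pi}{3}$. 2. For every $d\in\mathcal{S}^{N-1}_\alpha$, the ray $\{x_k+td: t\ge 0\}$ intersects $\overline{\mathcal{B}}(x^*,R_\epsilon)$ in a segment (chord) of length at least $R_\epsilon$. 3. If $x_k$ is the current iteration point of DFDS and some direction $d_m$ generated at $x_k$ lies in $\mathcal{S}^{N-1}_\alpha$, then the directional search at $x_k$ finds, with certainty, a point $y$ with $f(y)\le f(x_k)-\epsilon/3$.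
   Context: $f$ is continuous and real-valued; $\mathcal{X}\subset\mathbb{R}^N$ is compact and convex with diameter $D_0$; $f^*=\min_{x\in\mathcal{X}}f(x)$. For $R>0$, $\mathcal{X}_R=\{x\in\mathbb{R}^N:\min_{s\in\mathcal{X}}\|x-s\|\le R\}$; $\overline{\mathcal{B}}(x,R)$ is the closed Euclidean ball; $\mathcal{S}^{N-1}$ is the unit sphere. Standing assumption: for the given $\epsilon>0$, $R_\epsilon>0$ is such that $f$ is well-defined on $\mathcal{X}_{R_\epsilon}$ and for every $x\in\mathcal{X}_{R_\epsilon}$ with $f(x)\le f^*+\epsilon$ one has $f(y)\le f(x)+\epsilon/3$ for all $y\in\overline{\mathcal{B}}(x,R_\epsilon)\cap\mathcal{X}_{R_\epsilon}$. $\mathcal{X}^*_{R_\epsilon}=\{x\in\mathcal{X}_{R_\epsilon}: f(x)\le f^*+\frac{2\epsilon}{3}\}$. DFDS (inputs $R_\epsilon$, integer $M\ge1$, $\epsilon$): Step 0: choose $x_0\in\mathcal{X}$, set $k=0$, $m=0$. Step 1: if $m\ge M$ go to Step 3; otherwise draw $d_m$ uniformly on $\mathcal{S}^{N-1}$ and set $r=R_\epsilon$. Step 2: if $x_k+rd_m\notin\mathcal{X}_{R_\epsilon}$, set $m=m+1$ and go to Step 1; else if $f(x_k+rd_m)\le f(x_k)-\epsilon/3$, set $x_{k+1}=x_k+rd_m$, $k=k+1$, $m=0$ and go to Step 1; otherwise set $r=r+R_\epsilon$ and repeat Step 2. Step 3: output any point of $\mathcal{X}\cap\overline{\mathcal{B}}(x_k,R_\epsilon)$.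 The points $x_k$ are the iteration points; the "directional search at $x_k$" is the line search of Step 2 along directions drawn while the current iteration point is $x_k$. *)

theory Defs
  imports "HOL-Analysis.Analysis"
begin

definition enlarge :: "'a::euclidean_space set \<Rightarrow> real \<Rightarrow> 'a set" where
  "enlarge X R = {x. infdist x X \<le> R}"

definition vangle :: "'a::euclidean_space \<Rightarrow> 'a \<Rightarrow> real" where
  "vangle u v = (if u = 0 \<or> v = 0 then pi / 2
                 else arccos (inner u v / (norm u * norm v)))"

text \<open>Outcome of the directional search (Step 2 of DFDS) at iteration point x along
  direction d with step R: trial points x + j R d, j = 1,2,...; the search stops with
  failure at the first trial point outside X_R, and with success (a new iterate y
  with f y <= f x - eps/3) at the first trial point inside X_R with sufficient decrease.\<close>
definition dir_search_succeeds ::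
  "('a::euclidean_space \<Rightarrow> real) \<Rightarrow> 'a set \<Rightarrow> real \<Rightarrow> real \<Rightarrow> 'a \<Rightarrow> 'a \<Rightarrow> bool" where
  "dir_search_succeeds f X R eps x d \<longleftrightarrow>
     (\<exists>j::nat. 1 \<le> j \<and> (\<forall>i\<in>{1..j}. x + (real i * R) *\<^sub>R d \<in> enlarge X R)
        \<and> f (x + (real j * R) *\<^sub>R d) \<le> f x - eps / 3)"

end

theory Submission
  imports Defs
begin

(* Let \<rho> = |x* - x\<^sub>k| > R. A unit direction d within angle \<alpha> of x* - x\<^sub>k spans a line
   passing within \<rho> sin \<alpha> = (sqrt 3 / 2) R of x*, so the line cuts the ball B(x*, R) in a
   chord of half-length at least sqrt (R\<^sup>2 - 3 R\<^sup>2 / 4) = R / 2, and since x\<^sub>k lies outside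
   the ball the chord sits at positive parameters of the ray.  A chord of length at least R
   contains a trial point x\<^sub>k + j R d.  Every point of the ball has f \<le> f* + \<epsilon>/3 < f(x\<^sub>k) - \<epsilon>/3,
   and the earlier trial points lie between x\<^sub>k and that one, hence in the convex set X_R. *)

lemma mem_enlarge_iff:
  fixes X :: "'a::euclidean_space set"
  assumes "closed X" "X \<noteq> {}"
  shows "x \<in> enlarge X R \<longleftrightarrow> (\<exists>s\<in>X. dist x s \<le> R)"
proof
  assume "x \<in> enlarge X R"
  moreover obtain s where "s \<in> X" "infdist x X = dist x s"
    using infdist_attains_inf[OF assms] .
  ultimately show "\<exists>s\<in>X. dist x s \<le> R"
    by (auto simp: enlarge_def)
qed (auto simp: enlarge_def intro: infdist_le2)

lemma enlarge_eq_sums: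
  fixes X :: "'a::euclidean_space set"
  assumes "closed X" "X \<noteq> {}"
  shows "enlarge X R = (\<Union>s\<in>X. \<Union>v\<in>cball 0 R. {s + v})"
proof (intro set_eqI iffI)
  fix x
  assume "x \<in> enlarge X R"
  then obtain s where "s \<in> X" "dist x s \<le> R"
    by (auto simp: mem_enlarge_iff[OF assms])
  moreover have "x - s \<in> cball 0 R"
    using \<open>dist x s \<le> R\<close> by (simp add: dist_norm norm_minus_commute)
  ultimately show "x \<in> (\<Union>s\<in>X. \<Union>v\<in>cball 0 R. {s + v})"
    by force
next
  fix x
  assume "x \<in> (\<Union>s\<in>X. \<Union>v\<in>cball 0 R. {s + v})"
  then obtain s v where "s \<in> X" "norm v \<le> R" "x = s + v"
    by auto
  then show "x \<in> enlarge X R"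
    by (auto simp: mem_enlarge_iff[OF assms] dist_norm intro!: bexI[where x=s])
qed

lemma convex_enlarge:
  fixes X :: "'a::euclidean_space set"
  assumes "closed X" "convex X"
  shows "convex (enlarge X R)"
proof (cases "X = {}")
  case True
  then show ?thesis by (cases "0 \<le> R") (simp_all add: enlarge_def infdist_def)
next
  case False
  then show ?thesis
    unfolding enlarge_eq_sums[OF assms(1) False] using assms(2) by (intro convex_sums) auto
qed

lemma cball_subset_enlarge: "s \<in> X \<Longrightarrow> cball s R \<subseteq> enlarge X R"
  by (auto simp: enlarge_def dist_commute intro: infdist_le2)

lemma dist_le_diameter_add_enlarge:
  fixes X :: "'a::euclidean_space set"
  assumes "compact X" "s \<in> X" "x \<in> enlarge X R"
  shows "dist s x \<le> diameter X + R"
proof -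
  obtain s' where "s' \<in> X" "dist x s' \<le> R"
    using assms(3) mem_enlarge_iff[OF compact_imp_closed[OF assms(1)]] assms(2) by blast
  moreover have "dist s s' \<le> diameter X"
    using diameter_bounded_bound[OF compact_imp_bounded[OF assms(1)] assms(2) \<open>s' \<in> X\<close>] .
  ultimately show ?thesis
    using dist_triangle[of s x s'] by (simp add: dist_commute)
qed

lemma vangle_le_arccos_iff:
  fixes u v :: "'a::euclidean_space"
  assumes "u \<noteq> 0" "v \<noteq> 0" "\<bar>y\<bar> \<le> 1"
  shows "vangle u v \<le> arccos y \<longleftrightarrow> y * (norm u * norm v) \<le> inner u v"
proof -
  have pos: "0 < norm u * norm v"
    using assms by simp
  then have "\<bar>inner u v / (norm u * norm v)\<bar> \<le> 1"
    using Cauchy_Schwarz_ineq2[of u v] by (simp add: abs_divide)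
  then show ?thesis
    using assms pos arccos_le_mono[of "inner u v / (norm u * norm v)" y]
    by (simp add: vangle_def pos_le_divide_eq)
qed

lemma dist_line_power2:
  fixes c x d :: "'a::euclidean_space"
  assumes "norm d = 1"
  shows "(dist c (x + t *\<^sub>R d))\<^sup>2
         = (t - inner (c - x) d)\<^sup>2 + (norm (c - x))\<^sup>2 - (inner (c - x) d)\<^sup>2"
proof -
  define w where "w = c - x"
  have "dist c (x + t *\<^sub>R d) = norm (w - t *\<^sub>R d)"
    by (simp add: w_def dist_norm diff_diff_eq)
  moreover have "(norm (w - t *\<^sub>R d))\<^sup>2 = (norm w)\<^sup>2 + t\<^sup>2 - 2 * t * inner w d"
    using dot_norm_neg[of w "t *\<^sub>R d"] assms by simp
  ultimately show ?thesis
    unfolding w_def[symmetric] by (simp add: power2_diff)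
qed

lemma affine_image_atLeastAtMost:
  fixes x d :: "'a::real_vector"
  assumes "t1 \<le> t2"
  shows "(\<lambda>t. x + t *\<^sub>R d) ` {t1..t2} = closed_segment (x + t1 *\<^sub>R d) (x + t2 *\<^sub>R d)"
proof -
  have "closed_segment (t1 *\<^sub>R d) (t2 *\<^sub>R d) = (\<lambda>t. t *\<^sub>R d) ` {t1..t2}"
    using closed_segment_linear_image[of "\<lambda>t. t *\<^sub>R d" t1 t2] assms
    by (simp add: linear_scaleR_left closed_segment_eq_real_ivl)
  then show ?thesis
    by (simp add: closed_segment_translation image_image)
qed

lemma ray_inter_cball:
  fixes c x d :: "'a::euclidean_space"
  defines "a \<equiv> inner (c - x) d"
  assumes "norm d = 1" and "0 \<le> R" and "0 \<le> s" and "s \<le> a"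
    and "s\<^sup>2 = a\<^sup>2 - (norm (c - x))\<^sup>2 + R\<^sup>2"
  shows "{x + t *\<^sub>R d | t. t \<ge> 0} \<inter> cball c R
         = closed_segment (x + (a - s) *\<^sub>R d) (x + (a + s) *\<^sub>R d)"
proof -
  have key: "dist c (x + t *\<^sub>R d) \<le> R \<longleftrightarrow> t \<in> {a - s..a + s}" for t
  proof -
    have "dist c (x + t *\<^sub>R d) \<le> R \<longleftrightarrow> (dist c (x + t *\<^sub>R d))\<^sup>2 \<le> R\<^sup>2"
      using \<open>0 \<le> R\<close> by (simp add: power2_le_iff_abs_le)
    also have "\<dots> \<longleftrightarrow> (t - a)\<^sup>2 \<le> s\<^sup>2"
      using dist_line_power2[OF \<open>norm d = 1\<close>, of c x t, folded a_def] assms(6) by (smt (verit))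
    also have "\<dots> \<longleftrightarrow> t \<in> {a - s..a + s}"
      using \<open>0 \<le> s\<close> by (auto simp: power2_le_iff_abs_le abs_le_iff)
    finally show ?thesis .
  qed
  have "{x + t *\<^sub>R d | t. t \<ge> 0} \<inter> cball c R = (\<lambda>t. x + t *\<^sub>R d) ` {a - s..a + s}"
  proof (intro set_eqI iffI)
    fix y
    assume "y \<in> {x + t *\<^sub>R d | t. t \<ge> 0} \<inter> cball c R"
    then obtain t where "y = x + t *\<^sub>R d" "dist c y \<le> R"
      by auto
    then show "y \<in> (\<lambda>t. x + t *\<^sub>R d) ` {a - s..a + s}"
      using key[of t] by blast
  next
    fix y
    assume "y \<in> (\<lambda>t. x + t *\<^sub>R d) ` {a - s..a + s}"
    then obtain t where "y = x + t *\<^sub>R d" "t \<in> {a - s..a + s}"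
      by blast
    moreover have "0 \<le> t"
      using \<open>t \<in> {a - s..a + s}\<close> \<open>s \<le> a\<close> by simp
    ultimately show "y \<in> {x + t *\<^sub>R d | t. t \<ge> 0} \<inter> cball c R"
      using key[of t] by (auto simp: mem_cball)
  qed
  then show ?thesis
    using \<open>0 \<le> s\<close> by (simp add: affine_image_atLeastAtMost)
qed

lemma inner_lower_bound_in_cone:
  fixes u d :: "'a::euclidean_space"
  assumes "0 < R" "R < norm u" "norm d = 1"
    and "vangle u d \<le> arcsin (sqrt 3 * R / (2 * norm u))"
  shows "0 < inner u d" "(norm u)\<^sup>2 - 3 / 4 * R\<^sup>2 \<le> (inner u d)\<^sup>2"
proof -
  define \<gamma> where "\<gamma> = sqrt 3 * R / (2 * norm u)"
  have "0 < norm u"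
    using assms(1,2) by linarith
  have "sqrt 3 < 2"
    by (rule real_less_lsqrt) auto
  then have "sqrt 3 * R < 2 * norm u"
    using mult_strict_right_mono[OF \<open>sqrt 3 < 2\<close> assms(1)] assms(2) by linarith
  then have "0 < \<gamma>" "\<gamma> < 1"
    using \<open>0 < norm u\<close> assms(1) by (simp_all add: \<gamma>_def field_simps)
  then have "0 < 1 - \<gamma>\<^sup>2"
    by (simp add: power_less_one_iff)
  have "vangle u d \<le> arccos (sqrt (1 - \<gamma>\<^sup>2))"
    using assms(4) \<open>0 < \<gamma>\<close> \<open>\<gamma> < 1\<close> by (simp add: \<gamma>_def arcsin_arccos_sqrt_pos)
  then have lower: "sqrt (1 - \<gamma>\<^sup>2) * norm u \<le> inner u d"
    using \<open>0 < norm u\<close> \<open>0 < 1 - \<gamma>\<^sup>2\<close> assms(3) by (subst (asm) vangle_le_arccos_iff) auto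
  moreover have "0 < sqrt (1 - \<gamma>\<^sup>2) * norm u"
    using \<open>0 < norm u\<close> \<open>0 < 1 - \<gamma>\<^sup>2\<close> by simp
  ultimately show "0 < inner u d"
    by linarith
  have "(1 - \<gamma>\<^sup>2) * (norm u)\<^sup>2 \<le> (inner u d)\<^sup>2"
    using lower power_mono[OF lower, of 2] \<open>0 < 1 - \<gamma>\<^sup>2\<close> by (simp add: power_mult_distrib)
  moreover have "\<gamma>\<^sup>2 * (norm u)\<^sup>2 = 3 / 4 * R\<^sup>2"
    using \<open>0 < norm u\<close> by (simp add: \<gamma>_def power_divide power_mult_distrib)
  ultimately show "(norm u)\<^sup>2 - 3 / 4 * R\<^sup>2 \<le> (inner u d)\<^sup>2"
    by (simp add: algebra_simps)
qed

lemma ray_chord_in_cone: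
  fixes c x d :: "'a::euclidean_space"
  assumes "0 < R" "R < norm (c - x)" "norm d = 1"
    and "vangle (c - x) d \<le> arcsin (sqrt 3 * R / (2 * norm (c - x)))"
  obtains t1 t2 where "0 < t1" "t1 + R \<le> t2"
    "{x + t *\<^sub>R d | t. t \<ge> 0} \<inter> cball c R = closed_segment (x + t1 *\<^sub>R d) (x + t2 *\<^sub>R d)"
proof -
  define a where "a = inner (c - x) d"
  define s where "s = sqrt (a\<^sup>2 - (norm (c - x))\<^sup>2 + R\<^sup>2)"
  have "0 < a" and disc: "(R / 2)\<^sup>2 \<le> a\<^sup>2 - (norm (c - x))\<^sup>2 + R\<^sup>2"
    using inner_lower_bound_in_cone[OF assms] by (simp_all add: a_def power_divide)
  have "R / 2 \<le> s"
    using real_sqrt_le_mono[OF disc] assms(1) by (simp add: s_def)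
  have "s\<^sup>2 = a\<^sup>2 - (norm (c - x))\<^sup>2 + R\<^sup>2"
    using disc unfolding s_def by (meson order_trans real_sqrt_pow2 zero_le_power2)
  have "s < a"
    using \<open>0 < a\<close> assms(1,2) unfolding s_def
    by (intro real_less_lsqrt) (auto simp: power_strict_mono)
  show ?thesis
  proof
    show "0 < a - s" "a - s + R \<le> a + s"
      using \<open>s < a\<close> \<open>R / 2 \<le> s\<close> by simp_all
    show "{x + t *\<^sub>R d | t. t \<ge> 0} \<inter> cball c R
          = closed_segment (x + (a - s) *\<^sub>R d) (x + (a + s) *\<^sub>R d)"
      unfolding a_def
      by (rule ray_inter_cball) (use assms(1,3) \<open>R / 2 \<le> s\<close> \<open>s < a\<close> \<open>s\<^sup>2 = _\<close> in
          \<open>auto simp: a_def\<close>)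
  qed
qed

lemma arcsin_chord_angle_bounds:
  fixes R \<rho> D :: real
  assumes "0 < R" "R < \<rho>" "\<rho> \<le> D + R"
  shows "sqrt 3 * R / (2 * (D + R)) \<le> sin (arcsin (sqrt 3 * R / (2 * \<rho>)))
       \<and> sin (arcsin (sqrt 3 * R / (2 * \<rho>))) < sqrt 3 / 2
       \<and> arcsin (sqrt 3 * R / (2 * (D + R))) \<le> arcsin (sqrt 3 * R / (2 * \<rho>))
       \<and> arcsin (sqrt 3 * R / (2 * \<rho>)) < pi / 3"
proof -
  define \<gamma> where "\<gamma> = sqrt 3 * R / (2 * \<rho>)"
  define \<gamma>\<^sub>0 where "\<gamma>\<^sub>0 = sqrt 3 * R / (2 * (D + R))"
  have "0 < \<gamma>\<^sub>0" "\<gamma> < sqrt 3 / 2"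
    using assms by (simp_all add: \<gamma>_def \<gamma>\<^sub>0_def field_simps)
  moreover have "\<gamma>\<^sub>0 \<le> \<gamma>"
    unfolding \<gamma>_def \<gamma>\<^sub>0_def using assms by (intro divide_left_mono mult_left_mono) auto
  moreover have "sqrt 3 / 2 < 1"
    by (simp add: real_less_lsqrt)
  moreover have "arcsin (sqrt 3 / 2) = pi / 3"
    using arcsin_sin[of "pi / 3"] by (simp add: sin_60)
  ultimately show ?thesis
    unfolding \<gamma>_def[symmetric] \<gamma>\<^sub>0_def[symmetric]
    using arcsin_le_arcsin[of \<gamma>\<^sub>0 \<gamma>] arcsin_less_arcsin[of \<gamma> "sqrt 3 / 2"]
    by (simp add: sin_arcsin)
qed

lemma ex_nat_multiple_between:
  fixes R t :: real
  assumes "0 < R" "0 < t"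
  obtains j :: nat where "1 \<le> j" "t \<le> real j * R" "real j * R \<le> t + R"
proof
  define j where "j = nat \<lceil>t / R\<rceil>"
  have "0 < t / R"
    using assms by simp
  then have "real j = of_int \<lceil>t / R\<rceil>"
    by (simp add: j_def)
  then have "t / R \<le> real j" "real j < t / R + 1"
    by linarith+
  then show "t \<le> real j * R" "real j * R \<le> t + R"
    using assms(1) by (simp_all add: field_simps)
  show "1 \<le> j"
    using \<open>0 < t / R\<close> \<open>t / R \<le> real j\<close> by simp
qed

lemma dir_search_succeedsI:
  assumes "convex (enlarge X R)" "x \<in> enlarge X R" "1 \<le> j"
    and "x + (real j * R) *\<^sub>R d \<in> enlarge X R"
    and "f (x + (real j * R) *\<^sub>R d) \<le> f x - eps / 3"
  shows "dir_search_succeeds f X R eps x d"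
  unfolding dir_search_succeeds_def
proof (intro exI conjI ballI)
  fix i
  assume "i \<in> {1..j}"
  then have "x + (real i * R) *\<^sub>R d
      = (1 - real i / real j) *\<^sub>R x + (real i / real j) *\<^sub>R (x + (real j * R) *\<^sub>R d)"
    using \<open>1 \<le> j\<close> by (simp add: algebra_simps)
  also have "\<dots> \<in> closed_segment x (x + (real j * R) *\<^sub>R d)"
    using \<open>i \<in> {1..j}\<close> unfolding in_segment by (intro conjI exI[of _ "real i / real j"]) auto
  also have "\<dots> \<subseteq> enlarge X R"
    using assms(1,2,4) by (simp add: closed_segment_subset)
  finally show "x + (real i * R) *\<^sub>R d \<in> enlarge X R" .
qed (use assms(3,5) in auto)

lemma dir_search_succeeds_if_long_chord:
  assumes "convex (enlarge X R)" "x \<in> enlarge X R" "0 < R" "0 < t1" "t1 + R \<le> t2"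
    and "\<And>t. t \<in> {t1..t2} \<Longrightarrow> x + t *\<^sub>R d \<in> enlarge X R \<and> f (x + t *\<^sub>R d) \<le> f x - eps / 3"
  shows "dir_search_succeeds f X R eps x d"
proof -
  obtain j :: nat where "1 \<le> j" "t1 \<le> real j * R" "real j * R \<le> t1 + R"
    using ex_nat_multiple_between[OF \<open>0 < R\<close> \<open>0 < t1\<close>] .
  then show ?thesis
    using assms(6)[of "real j * R"] \<open>t1 + R \<le> t2\<close>
    by (intro dir_search_succeedsI[OF assms(1,2) \<open>1 \<le> j\<close>]) auto
qed

lemma cone_direction_chord_and_search:
  fixes c x d :: "'a::euclidean_space"
  assumes "convex (enlarge X R)" "x \<in> enlarge X R" "cball c R \<subseteq> enlarge X R"
    and "\<forall>y\<in>cball c R. f y \<le> f x - eps / 3"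
    and "0 < R" "R < norm (c - x)" "norm d = 1"
    and "vangle (c - x) d \<le> arcsin (sqrt 3 * R / (2 * norm (c - x)))"
  shows "(\<exists>p q. {x + t *\<^sub>R d | t. t \<ge> 0} \<inter> cball c R = closed_segment p q \<and> dist p q \<ge> R)
         \<and> dir_search_succeeds f X R eps x d"
proof -
  obtain t1 t2 where "0 < t1" "t1 + R \<le> t2" and chord:
    "{x + t *\<^sub>R d | t. t \<ge> 0} \<inter> cball c R = closed_segment (x + t1 *\<^sub>R d) (x + t2 *\<^sub>R d)"
    using ray_chord_in_cone[OF assms(5-8)] .
  have "R \<le> dist (x + t1 *\<^sub>R d) (x + t2 *\<^sub>R d)"
    using \<open>t1 + R \<le> t2\<close> \<open>norm d = 1\<close> by (simp add: dist_norm scaleR_diff_left[symmetric])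
  moreover have "x + t *\<^sub>R d \<in> cball c R" if "t \<in> {t1..t2}" for t
  proof -
    have "x + t *\<^sub>R d \<in> (\<lambda>t. x + t *\<^sub>R d) ` {t1..t2}"
      using that by (rule imageI)
    also have "\<dots> = closed_segment (x + t1 *\<^sub>R d) (x + t2 *\<^sub>R d)"
      using \<open>t1 + R \<le> t2\<close> \<open>0 < R\<close> by (intro affine_image_atLeastAtMost) linarith
    also have "\<dots> \<subseteq> cball c R"
      using chord by blast
    finally show ?thesis .
  qed
  then have "dir_search_succeeds f X R eps x d"
    using assms(3,4)
    by (intro dir_search_succeeds_if_long_chord[OF assms(1,2,5) \<open>0 < t1\<close> \<open>t1 + R \<le> t2\<close>]) auto
  ultimately show ?thesis
    using chord by blast
qed

theorem lemma3:
  fixes f :: "'a::euclidean_space \<Rightarrow> real"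
    and X :: "'a set" and eps R :: real and xstar xk :: 'a
  assumes "compact X" and "convex X"
    and "eps > 0" and "R > 0"
    and "continuous_on (enlarge X R) f"
    and "xstar \<in> X" and "\<forall>x\<in>X. f xstar \<le> f x"
    and "\<forall>x\<in>enlarge X R. f x \<le> f xstar + eps \<longrightarrow>
           (\<forall>y\<in>cball x R \<inter> enlarge X R. f y \<le> f x + eps / 3)"
    and "xk \<in> enlarge X R"
    and "\<not> (f xk \<le> f xstar + 2 * eps / 3)"
  shows "let \<alpha> = arcsin (sqrt 3 * R / (2 * norm (xstar - xk)));
             S\<alpha> = {d. norm d = 1 \<and> vangle (xstar - xk) d \<le> \<alpha>}
         in (sqrt 3 * R / (2 * (diameter X + R)) \<le> sin \<alpha> \<and> sin \<alpha> < sqrt 3 / 2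
             \<and> arcsin (sqrt 3 * R / (2 * (diameter X + R))) \<le> \<alpha> \<and> \<alpha> < pi / 3)
          \<and> (\<forall>d\<in>S\<alpha>. \<exists>p q. {xk + t *\<^sub>R d | t. t \<ge> 0} \<inter> cball xstar R = closed_segment p q
                              \<and> dist p q \<ge> R)
          \<and> (\<forall>d\<in>S\<alpha>. dir_search_succeeds f X R eps xk d)"
proof -
  have ball_sub: "cball xstar R \<subseteq> enlarge X R"
    using cball_subset_enlarge[OF assms(6)] .
  have near_min: "f y \<le> f xstar + eps / 3" if "y \<in> cball xstar R" for y
  proof (rule assms(8)[rule_format])
    show "xstar \<in> enlarge X R" "y \<in> cball xstar R \<inter> enlarge X R"
      using ball_sub that assms(4) by auto
  qed (use assms(3) in simp)
  then have decrease: "\<forall>y\<in>cball xstar R. f y \<le> f xk - eps / 3"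
    using assms(10) by force
  have far: "R < norm (xstar - xk)"
    using near_min[of xk] assms(3,10) by (force simp: dist_norm)
  have "norm (xstar - xk) \<le> diameter X + R"
    using dist_le_diameter_add_enlarge[OF assms(1,6,9)] by (simp add: dist_norm)
  moreover have "convex (enlarge X R)"
    using convex_enlarge[OF compact_imp_closed[OF assms(1)] assms(2)] .
  ultimately show ?thesis
    unfolding Let_def
    using arcsin_chord_angle_bounds[OF assms(4) far]
      cone_direction_chord_and_search[OF _ assms(9) ball_sub decrease assms(4) far]
    by auto
qed

end
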